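(* For every $n\geq 2$, let $D_n^2$ be the random variable that chooses independently a pair of trees $T,T'\in\mathcal{T}_n$ and computes $d_{\varphi,2}(T,T')^2$. Under the uniform model its expected value is $$E_U(D_n^2)=\frac{1}{3}(4n^3+18n^2-10n)-\frac{n(n+3)}{2}\cdot\frac{(2n-2)!!}{(2n-3)!!}-\frac{n(n+7)}{4}\left(\frac{(2n-2)!!}{(2n-3)!!}\right)^2.$$
   Context: A phylogenetic tree with $n$ leaves is a fully resolved (binary) rooted tree, viewed as a directed graph with arcs pointing away from the root, whose leaves are bijectively labeled by $\{1,\dots,n\}$; $\mathcal{T}_n$ denotes the set of all such trees (up to label-preserving isomorphism); $|\mathcal{T}_n|=(2n-3)!!$. The depth $\delta_T(v)$ of a node is the number of arcs from the root to it. For leaves $i\neq j$, $\varphi_T(i,j)$ is the depth of the lowest common ancestor of $i$ and $j$, and $\varphi_T(i,i)=\delta_T(i)$. The euclidean cophenetic metric is $d_{\varphi,2}(T_1,T_2)=\sqrt{\sum_{1\le i\le j\le n}(\varphi_{T_1}(i,j)-\varphi_{T_2}(i,j))^2}$. The uniform model gives each $T\in\mathcal{T}_n$ probability $1/(2n-3)!!$, and the two trees are chosen independently. Here $(2m-1)!!=(2m-1)(2m-3)\cdots 3\cdot 1$ and $(2m)!!=(2m)(2m-2)\cdots 2$, with $0!!=1$. *)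

theory Defs
  imports Complex_Main
begin

text \<open>Rooted binary trees with labelled leaves (ordered representation;
  phylogenetic trees are the classes modulo swapping children).\<close>
datatype ptree = Leaf nat | Node ptree ptree

fun leaves :: "ptree \<Rightarrow> nat list" where
  "leaves (Leaf i) = [i]"
| "leaves (Node a b) = leaves a @ leaves b"

definition valid_tree :: "nat \<Rightarrow> ptree \<Rightarrow> bool" where
  "valid_tree n t \<longleftrightarrow> distinct (leaves t) \<and> set (leaves t) = {1..n}"

inductive tree_iso :: "ptree \<Rightarrow> ptree \<Rightarrow> bool" where
  iso_leaf: "tree_iso (Leaf i) (Leaf i)"
| iso_same: "tree_iso a a' \<Longrightarrow> tree_iso b b' \<Longrightarrow> tree_iso (Node a b) (Node a' b')"
| iso_swap: "tree_iso a b' \<Longrightarrow> tree_iso b a' \<Longrightarrow> tree_iso (Node a b) (Node a' b')"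

definition phylo_trees :: "nat \<Rightarrow> ptree set set" where
  "phylo_trees n = {t. valid_tree n t} // {(s, t). tree_iso s t}"

fun leaf_depth :: "ptree \<Rightarrow> nat \<Rightarrow> nat" where
  "leaf_depth (Leaf j) i = 0"
| "leaf_depth (Node a b) i =
     1 + (if i \<in> set (leaves a) then leaf_depth a i else leaf_depth b i)"

fun lca_depth :: "ptree \<Rightarrow> nat \<Rightarrow> nat \<Rightarrow> nat" where
  "lca_depth (Leaf k) i j = 0"
| "lca_depth (Node a b) i j =
     (if i \<in> set (leaves a) \<and> j \<in> set (leaves a) then 1 + lca_depth a i j
      else if i \<in> set (leaves b) \<and> j \<in> set (leaves b) then 1 + lca_depth b i j
      else 0)"

definition cophenetic :: "ptree \<Rightarrow> nat \<Rightarrow> nat \<Rightarrow> nat" where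
  "cophenetic t i j = (if i = j then leaf_depth t i else lca_depth t i j)"

definition coph_dist_sq :: "nat \<Rightarrow> ptree \<Rightarrow> ptree \<Rightarrow> real" where
  "coph_dist_sq n t1 t2 =
     (\<Sum>i=1..n. \<Sum>j=i..n. (real (cophenetic t1 i j) - real (cophenetic t2 i j))^2)"

definition rep :: "ptree set \<Rightarrow> ptree" where
  "rep C = (SOME t. t \<in> C)"

definition expected_D2_uniform :: "nat \<Rightarrow> real" where
  "expected_D2_uniform n =
     (\<Sum>C\<in>phylo_trees n. \<Sum>D\<in>phylo_trees n. coph_dist_sq n (rep C) (rep D))
       / (real (card (phylo_trees n)))^2"

fun dfact :: "nat \<Rightarrow> nat" where
  "dfact 0 = 1"
| "dfact (Suc 0) = 1"
| "dfact (Suc (Suc m)) = Suc (Suc m) * dfact m"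

end

theory Submission
  imports Defs
begin

(* Each phylogenetic tree on {1..n} has exactly 2^(n-1) ordered representatives, so the uniform
   expectation may be taken over ordered trees, where it equals 2 * \<Sum>_{i\<le>j} Var \<phi>(i,j).
   Every ordered tree on L \<union> {x} arises exactly once by grafting x, on either side, onto one of
   the 2|L| - 2 arcs of an ordered tree on L or onto a new edge above its root.  Such a graft pushes the lowest
   common ancestor of i and j one level down iff it lands on one of the arcs above it; this gives
   linear recurrences in |L| for the first two moments of \<phi>(i,j), whose solutions are affine in
   r_m = (2m-2)!!/(2m-3)!!, since r_(m+1) (2m-1) = 2m r_m. *)

fun leaf_insertions :: "nat \<Rightarrow> ptree \<Rightarrow> ptree list" where
  "leaf_insertions x (Leaf i) = [Node (Leaf i) (Leaf x), Node (Leaf x) (Leaf i)]"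
| "leaf_insertions x (Node a b) =
     [Node (Node a b) (Leaf x), Node (Leaf x) (Node a b)]
     @ map (\<lambda>a'. Node a' b) (leaf_insertions x a) @ map (\<lambda>b'. Node a b') (leaf_insertions x b)"

fun remove_leaf :: "nat \<Rightarrow> ptree \<Rightarrow> ptree" where
  "remove_leaf x (Leaf i) = Leaf i"
| "remove_leaf x (Node a b) =
     (if a = Leaf x then b else if b = Leaf x then a
      else if x \<in> set (leaves a) then Node (remove_leaf x a) b else Node a (remove_leaf x b))"

lemma leaves_nonempty: "leaves t \<noteq> []"
  by (induct t) auto

lemma length_leaves: "length (leaves t) = Suc (size t)"
  by (induct t) auto

lemma length_leaf_insertions: "length (leaf_insertions x t) = 2 * (2 * size t + 1)"
  by (induct t) auto

lemma leaf_insertions_Node: "u \<in> set (leaf_insertions x t) \<Longrightarrow> \<exists>p q. u = Node p q"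
  by (induct t) auto

lemma leaves_leaf_insertions:
  "u \<in> set (leaf_insertions x t) \<Longrightarrow> set (leaves u) = insert x (set (leaves t))"
  by (induct t arbitrary: u) auto

lemma distinct_leaves_leaf_insertions:
  "u \<in> set (leaf_insertions x t) \<Longrightarrow> distinct (leaves t) \<Longrightarrow> x \<notin> set (leaves t)
   \<Longrightarrow> distinct (leaves u)"
  by (induct t arbitrary: u) (fastforce dest: leaves_leaf_insertions)+

lemma remove_leaf_leaf_insertions:
  "x \<notin> set (leaves t) \<Longrightarrow> u \<in> set (leaf_insertions x t) \<Longrightarrow> remove_leaf x u = t"
  by (induct t arbitrary: u) (fastforce dest: leaves_leaf_insertions leaf_insertions_Node)+

lemma distinct_leaf_insertions: "x \<notin> set (leaves t) \<Longrightarrow> distinct (leaf_insertions x t)"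
  by (induct t) (auto simp: distinct_map inj_on_def dest: leaves_leaf_insertions leaf_insertions_Node)

lemma graft_at_root:
  "Node t (Leaf x) \<in> set (leaf_insertions x t) \<and> Node (Leaf x) t \<in> set (leaf_insertions x t)"
  by (cases t) auto

lemma remove_leaf_correct:
  "distinct (leaves u) \<Longrightarrow> x \<in> set (leaves u) \<Longrightarrow> u \<noteq> Leaf x \<Longrightarrow>
   u \<in> set (leaf_insertions x (remove_leaf x u)) \<and>
   set (leaves (remove_leaf x u)) = set (leaves u) - {x} \<and> distinct (leaves (remove_leaf x u))"
proof (induct u)
  case (Node a b)
  then show ?case
    using graft_at_root[of a x] graft_at_root[of b x]
    by (cases "a = Leaf x"; cases "b = Leaf x"; cases "x \<in> set (leaves a)") auto
qed simp

definition trees_on :: "nat set \<Rightarrow> ptree set" where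
  "trees_on L = {t. distinct (leaves t) \<and> set (leaves t) = L}"

lemma trees_on_singleton: "trees_on {x} = {Leaf x}"
proof -
  have "t = Leaf x" if "distinct (leaves t)" "set (leaves t) = {x}" for t
    using that length_leaves[of t] distinct_card[OF that(1)] by (cases t) auto
  then show ?thesis by (auto simp: trees_on_def)
qed

lemma trees_on_insert:
  assumes "x \<notin> L" "L \<noteq> {}"
  shows "trees_on (insert x L) = (\<Union>t\<in>trees_on L. set (leaf_insertions x t))"
proof
  show "(\<Union>t\<in>trees_on L. set (leaf_insertions x t)) \<subseteq> trees_on (insert x L)"
    using leaves_leaf_insertions distinct_leaves_leaf_insertions assms
    by (fastforce simp: trees_on_def)
  show "trees_on (insert x L) \<subseteq> (\<Union>t\<in>trees_on L. set (leaf_insertions x t))"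
  proof
    fix u assume u: "u \<in> trees_on (insert x L)"
    then have "u \<noteq> Leaf x" using assms by (auto simp: trees_on_def)
    with u have "remove_leaf x u \<in> trees_on L" "u \<in> set (leaf_insertions x (remove_leaf x u))"
      using remove_leaf_correct assms by (auto simp: trees_on_def)
    then show "u \<in> (\<Union>t\<in>trees_on L. set (leaf_insertions x t))" by blast
  qed
qed

lemma finite_trees_on: "finite L \<Longrightarrow> finite (trees_on L)"
proof (induct L rule: finite_induct)
  case empty
  then show ?case using leaves_nonempty by (simp add: trees_on_def)
next
  case (insert x L)
  then show ?case by (cases "L = {}") (simp_all add: trees_on_singleton trees_on_insert)
qed

lemma trees_on_nonempty: "finite L \<Longrightarrow> L \<noteq> {} \<Longrightarrow> trees_on L \<noteq> {}"
proof (induct L rule: finite_induct)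
  case (insert x L)
  show ?case
  proof (cases "L = {}")
    case False
    then obtain t where "t \<in> trees_on L" using insert by blast
    then show ?thesis using graft_at_root[of t x] insert False by (auto simp: trees_on_insert)
  qed (simp add: trees_on_singleton)
qed simp

lemma sum_trees_on_insert:
  assumes "finite L" "x \<notin> L" "L \<noteq> {}"
  shows "(\<Sum>u\<in>trees_on (insert x L). f u) = (\<Sum>t\<in>trees_on L. \<Sum>u\<leftarrow>leaf_insertions x t. f u)"
proof -
  have "\<forall>s\<in>trees_on L. \<forall>t\<in>trees_on L. s \<noteq> t \<longrightarrow>
          set (leaf_insertions x s) \<inter> set (leaf_insertions x t) = {}"
    using remove_leaf_leaf_insertions assms(2) unfolding trees_on_def by blast
  then have "(\<Sum>u\<in>trees_on (insert x L). f u) = (\<Sum>t\<in>trees_on L. \<Sum>u\<in>set (leaf_insertions x t). f u)"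
    unfolding trees_on_insert[OF assms(2,3)]
    using finite_trees_on assms by (intro sum.UNION_disjoint) auto
  also have "\<dots> = (\<Sum>t\<in>trees_on L. \<Sum>u\<leftarrow>leaf_insertions x t. f u)"
    using distinct_leaf_insertions assms(2)
    by (intro sum.cong refl) (auto simp: trees_on_def sum_list_distinct_conv_sum_set)
  finally show ?thesis .
qed

(* Of the 2 (2 size t + 1) grafts, the 2 (d + 1) onto the arcs above the lowest common ancestor
   of i and j, at depth d, push it one level down; all others leave it in place. *)
lemma sum_leaf_insertions_lca_depth:
  fixes g :: "nat \<Rightarrow> real"
  assumes "x \<notin> set (leaves t)" "distinct (leaves t)" "i \<in> set (leaves t)" "j \<in> set (leaves t)"
  shows "(\<Sum>u\<leftarrow>leaf_insertions x t. g (lca_depth u i j)) =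
    2 * (2 * real (size t) - real (lca_depth t i j)) * g (lca_depth t i j)
    + 2 * (real (lca_depth t i j) + 1) * g (Suc (lca_depth t i j))"
  using assms
proof (induct t arbitrary: g)
  case (Node a b)
  have ij: "i \<noteq> x" "j \<noteq> x" using Node.prems by auto
  have in_a: "u \<in> set (leaf_insertions x a) \<Longrightarrow> y \<in> set (leaves u) \<longleftrightarrow> y = x \<or> y \<in> set (leaves a)"
    for u y using leaves_leaf_insertions by blast
  have in_b: "u \<in> set (leaf_insertions x b) \<Longrightarrow> y \<in> set (leaves u) \<longleftrightarrow> y = x \<or> y \<in> set (leaves b)"
    for u y using leaves_leaf_insertions by blast
  consider (left) "i \<in> set (leaves a)" "j \<in> set (leaves a)"
    | (right) "i \<in> set (leaves b)" "j \<in> set (leaves b)"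
    | (split) "lca_depth (Node a b) i j = 0"
    by fastforce
  then show ?case
  proof cases
    case left
    have sums: "(\<Sum>u\<leftarrow>leaf_insertions x a. g (lca_depth (Node u b) i j))
        = (\<Sum>u\<leftarrow>leaf_insertions x a. g (Suc (lca_depth u i j)))"
      "(\<Sum>u\<leftarrow>leaf_insertions x b. g (lca_depth (Node a u) i j))
        = (\<Sum>u\<leftarrow>leaf_insertions x b. g (Suc (lca_depth a i j)))"
      using left by (auto intro!: arg_cong[of _ _ sum_list] map_cong simp: in_a)
    show ?thesis
      using Node.hyps(1)[of "\<lambda>d. g (Suc d)"] Node.prems left ij
      by (simp only: leaf_insertions.simps map_append map_map o_def sum_list_append sums)
        (simp add: sum_list_triv length_leaf_insertions algebra_simps)
  next
    case right
    then have "i \<notin> set (leaves a)" using Node.prems by auto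
    have sums: "(\<Sum>u\<leftarrow>leaf_insertions x a. g (lca_depth (Node u b) i j))
        = (\<Sum>u\<leftarrow>leaf_insertions x a. g (Suc (lca_depth b i j)))"
      "(\<Sum>u\<leftarrow>leaf_insertions x b. g (lca_depth (Node a u) i j))
        = (\<Sum>u\<leftarrow>leaf_insertions x b. g (Suc (lca_depth u i j)))"
      using right \<open>i \<notin> set (leaves a)\<close> ij
      by (auto intro!: arg_cong[of _ _ sum_list] map_cong simp: in_a in_b)
    show ?thesis
      using Node.hyps(2)[of "\<lambda>d. g (Suc d)"] Node.prems right \<open>i \<notin> set (leaves a)\<close> ij
      by (simp only: leaf_insertions.simps map_append map_map o_def sum_list_append sums)
        (simp add: sum_list_triv length_leaf_insertions algebra_simps)
  next
    case split
    then have "\<not> (i \<in> set (leaves a) \<and> j \<in> set (leaves a))"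
      "\<not> (i \<in> set (leaves b) \<and> j \<in> set (leaves b))"
      by (auto split: if_splits)
    then have sums: "(\<Sum>u\<leftarrow>leaf_insertions x a. g (lca_depth (Node u b) i j))
        = (\<Sum>u\<leftarrow>leaf_insertions x a. g 0)"
      "(\<Sum>u\<leftarrow>leaf_insertions x b. g (lca_depth (Node a u) i j))
        = (\<Sum>u\<leftarrow>leaf_insertions x b. g 0)"
      using ij by (auto intro!: arg_cong[of _ _ sum_list] map_cong simp: in_a in_b)
    show ?thesis
      using split Node.prems ij
      by (simp only: leaf_insertions.simps map_append map_map o_def sum_list_append sums)
        (simp add: sum_list_triv length_leaf_insertions algebra_simps)
  qed
qed simp

definition lca_moment :: "nat \<Rightarrow> nat set \<Rightarrow> nat \<Rightarrow> nat \<Rightarrow> real" where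
  "lca_moment k L i j = (\<Sum>t\<in>trees_on L. real (lca_depth t i j) ^ k)"

lemma lca_moment_0: "lca_moment 0 L i j = real (card (trees_on L))"
  by (simp add: lca_moment_def)

lemma size_trees_on: "t \<in> trees_on L \<Longrightarrow> real (size t) = real (card L) - 1"
  using length_leaves[of t] distinct_card[of "leaves t"] by (simp add: trees_on_def)

lemma lca_moments_insert:
  assumes "finite L" "x \<notin> L" "i \<in> L" "j \<in> L"
  defines "m \<equiv> real (card L)"
  shows "lca_moment 0 (insert x L) i j = 2 * (2 * m - 1) * lca_moment 0 L i j"
    and "lca_moment 1 (insert x L) i j = 4 * m * lca_moment 1 L i j + 2 * lca_moment 0 L i j"
    and "lca_moment 2 (insert x L) i j =
           2 * (2 * m + 1) * lca_moment 2 L i j + 6 * lca_moment 1 L i j + 2 * lca_moment 0 L i j"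
proof -
  have nonempty: "L \<noteq> {}" using assms(3) by blast
  have grow: "lca_moment k (insert x L) i j = (\<Sum>t\<in>trees_on L.
      2 * (2 * m - 2 - real (lca_depth t i j)) * real (lca_depth t i j) ^ k
      + 2 * (real (lca_depth t i j) + 1) * (real (lca_depth t i j) + 1) ^ k)" for k
    unfolding lca_moment_def sum_trees_on_insert[OF assms(1,2) nonempty]
  proof (intro sum.cong refl)
    fix t assume t: "t \<in> trees_on L"
    then have "x \<notin> set (leaves t)" "distinct (leaves t)" "i \<in> set (leaves t)" "j \<in> set (leaves t)"
      using assms by (auto simp: trees_on_def)
    from sum_leaf_insertions_lca_depth[OF this, of "\<lambda>d. real d ^ k"]
    show "(\<Sum>u\<leftarrow>leaf_insertions x t. real (lca_depth u i j) ^ k) =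
      2 * (2 * m - 2 - real (lca_depth t i j)) * real (lca_depth t i j) ^ k
      + 2 * (real (lca_depth t i j) + 1) * (real (lca_depth t i j) + 1) ^ k"
      using size_trees_on[OF t] by (simp add: m_def algebra_simps)
  qed
  show "lca_moment 0 (insert x L) i j = 2 * (2 * m - 1) * lca_moment 0 L i j"
    unfolding grow by (simp add: lca_moment_def sum_distrib_left algebra_simps)
  show "lca_moment 1 (insert x L) i j = 4 * m * lca_moment 1 L i j + 2 * lca_moment 0 L i j"
    unfolding grow by (simp add: lca_moment_def sum.distrib sum_distrib_left algebra_simps)
  show "lca_moment 2 (insert x L) i j =
      2 * (2 * m + 1) * lca_moment 2 L i j + 6 * lca_moment 1 L i j + 2 * lca_moment 0 L i j"
    unfolding grow by (simp add: lca_moment_def sum.distrib sum_distrib_left power2_eq_square algebra_simps)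
qed

definition dfact_ratio :: "nat \<Rightarrow> real" where
  "dfact_ratio m = real (dfact (2 * m - 2)) / real (dfact (2 * m - 3))"

lemma dfact_pos: "dfact k > 0"
  by (induct k rule: dfact.induct) auto

lemma dfact_odd: "dfact (2 * k + 1) = (2 * k + 1) * dfact (2 * k - 1)"
  by (cases k) (simp_all add: numeral_2_eq_2)

lemma dfact_ratio_Suc:
  assumes "m \<ge> 1"
  shows "dfact_ratio (Suc m) = 2 * real m / (2 * real m - 1) * dfact_ratio m"
proof -
  obtain k where k: "m = Suc k" using assms by (cases m) auto
  have "2 * Suc m - 3 = 2 * k + 1" "2 * m - 3 = 2 * k - 1" using k by auto
  then have "dfact (2 * Suc m - 3) = (2 * k + 1) * dfact (2 * m - 3)"
    by (simp only: dfact_odd)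
  moreover have "dfact (2 * Suc m - 2) = (2 * k + 2) * dfact (2 * m - 2)"
    using k by (simp add: numeral_2_eq_2)
  ultimately show ?thesis
    using dfact_pos[of "2 * m - 3"] k unfolding dfact_ratio_def by (simp add: field_simps)
qed

(* c r_m - 1 solves the first-moment recurrence and d (2m - 1) the homogeneous part of the
   second; the constants c and d are fitted to the starting set K. *)
lemma lca_moments_closed_form:
  assumes "finite K" "finite F" "i \<in> K" "j \<in> K"
    and "lca_moment 1 K i j = lca_moment 0 K i j * (c * dfact_ratio (card K) - 1)"
    and "lca_moment 2 K i j = lca_moment 0 K i j *
           (d * (2 * real (card K) - 1) + 1 - 3 * c * dfact_ratio (card K))"
  shows "lca_moment 1 (K \<union> F) i j = lca_moment 0 (K \<union> F) i j * (c * dfact_ratio (card (K \<union> F)) - 1)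
     \<and> lca_moment 2 (K \<union> F) i j = lca_moment 0 (K \<union> F) i j *
           (d * (2 * real (card (K \<union> F)) - 1) + 1 - 3 * c * dfact_ratio (card (K \<union> F)))"
  using assms(2)
proof (induct F rule: finite_induct)
  case (insert x F)
  define L where "L = K \<union> F"
  define m where "m = card L"
  show ?case
  proof (cases "x \<in> L")
    case True
    then show ?thesis using insert by (simp add: L_def insert_absorb)
  next
    case False
    have L: "finite L" "x \<notin> L" "i \<in> L" "j \<in> L" "m \<ge> 1"
      using False insert.hyps assms(1,3,4) by (auto simp: L_def m_def card_gt_0_iff Suc_le_eq)
    have KxF: "K \<union> insert x F = insert x L" "card (insert x L) = Suc m"
      using L by (auto simp: L_def m_def)
    have m: "2 * real m - 1 \<noteq> 0" using L(5) by simp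
    have IH: "lca_moment 1 L i j = lca_moment 0 L i j * (c * dfact_ratio m - 1)"
      "lca_moment 2 L i j = lca_moment 0 L i j * (d * (2 * real m - 1) + 1 - 3 * c * dfact_ratio m)"
      using insert.hyps(3) by (simp_all add: L_def m_def)
    show ?thesis
      using m unfolding KxF lca_moments_insert[OF L(1-4)] dfact_ratio_Suc[OF L(5)] IH m_def[symmetric]
      by (simp add: field_simps)
  qed
qed (use assms in simp)

lemma trees_on_doubleton: "i \<noteq> j \<Longrightarrow> trees_on {i, j} = {Node (Leaf j) (Leaf i), Node (Leaf i) (Leaf j)}"
  by (simp add: trees_on_insert trees_on_singleton)

lemma leaf_depth_moments:
  assumes "finite L" "i \<in> L"
  shows "lca_moment 1 L i i = lca_moment 0 L i i * (dfact_ratio (card L) - 1)"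
    and "lca_moment 2 L i i = lca_moment 0 L i i * (4 * real (card L) - 1 - 3 * dfact_ratio (card L))"
proof -
  have base: "lca_moment k {i} i i = (if k = 0 then 1 else 0)" for k
    by (simp add: lca_moment_def trees_on_singleton)
  have "{i} \<union> L = L" using assms(2) by blast
  with lca_moments_closed_form[of "{i}" L i i 1 2] assms
  show "lca_moment 1 L i i = lca_moment 0 L i i * (dfact_ratio (card L) - 1)"
    and "lca_moment 2 L i i = lca_moment 0 L i i * (4 * real (card L) - 1 - 3 * dfact_ratio (card L))"
    by (simp_all add: base dfact_ratio_def algebra_simps)
qed

lemma lca_depth_moments:
  assumes "finite L" "i \<in> L" "j \<in> L" "i \<noteq> j"
  shows "lca_moment 1 L i j = lca_moment 0 L i j * (dfact_ratio (card L) / 2 - 1)"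
    and "lca_moment 2 L i j =
           lca_moment 0 L i j * ((4 * real (card L) + 1) / 3 - 3 / 2 * dfact_ratio (card L))"
proof -
  have base: "lca_moment k {i, j} i j = (if k = 0 then 2 else 0)" for k
    using assms(4) by (simp add: lca_moment_def trees_on_doubleton)
  have "{i, j} \<union> L = L" using assms(2,3) by blast
  with lca_moments_closed_form[of "{i, j}" L i j "1/2" "2/3"] assms
  show "lca_moment 1 L i j = lca_moment 0 L i j * (dfact_ratio (card L) / 2 - 1)"
    and "lca_moment 2 L i j =
           lca_moment 0 L i j * ((4 * real (card L) + 1) / 3 - 3 / 2 * dfact_ratio (card L))"
    by (simp_all add: base dfact_ratio_def numeral_2_eq_2 algebra_simps)
qed

lemma lca_depth_self: "i \<in> set (leaves t) \<Longrightarrow> lca_depth t i i = leaf_depth t i"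
  by (induct t) auto

lemma cophenetic_eq_lca_depth: "i \<in> set (leaves t) \<Longrightarrow> cophenetic t i j = lca_depth t i j"
  unfolding cophenetic_def using lca_depth_self by auto

lemma sum_sum_diff_square:
  fixes f :: "'a \<Rightarrow> 'b::comm_ring_1"
  shows "(\<Sum>x\<in>A. \<Sum>y\<in>A. (f x - f y)^2) = 2 * of_nat (card A) * (\<Sum>x\<in>A. f x^2) - 2 * (\<Sum>x\<in>A. f x)^2"
  by (simp add: power2_diff sum.distrib sum_subtractf sum_distrib_left sum_distrib_right
      power2_eq_square algebra_simps)

lemma sum_sum_diff_square_cophenetic:
  assumes "finite L" "i \<in> L" "j \<in> L"
  defines "m \<equiv> real (card L)" and "r \<equiv> dfact_ratio (card L)"
  shows "(\<Sum>t\<in>trees_on L. \<Sum>u\<in>trees_on L. (real (cophenetic t i j) - real (cophenetic u i j))^2)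
    = 2 * real (card (trees_on L))^2 *
      (if i = j then 4 * m - 1 - 3 * r - (r - 1)^2
       else (4 * m + 1) / 3 - 3 / 2 * r - (r / 2 - 1)^2)"
proof -
  have "(\<Sum>t\<in>trees_on L. \<Sum>u\<in>trees_on L. (real (cophenetic t i j) - real (cophenetic u i j))^2)
      = (\<Sum>t\<in>trees_on L. \<Sum>u\<in>trees_on L. (real (lca_depth t i j) - real (lca_depth u i j))^2)"
    using assms(2) by (intro sum.cong refl) (simp add: trees_on_def cophenetic_eq_lca_depth)
  also have "\<dots> = 2 * lca_moment 0 L i j * lca_moment 2 L i j - 2 * (lca_moment 1 L i j)^2"
    by (simp add: sum_sum_diff_square lca_moment_def)
  also have "\<dots> = 2 * real (card (trees_on L))^2 *
      (if i = j then 4 * m - 1 - 3 * r - (r - 1)^2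
       else (4 * m + 1) / 3 - 3 / 2 * r - (r / 2 - 1)^2)"
  proof (cases "i = j")
    case True
    then show ?thesis
      unfolding True leaf_depth_moments[OF assms(1,3)] lca_moment_0 m_def r_def
      by (simp add: power2_eq_square algebra_simps)
  next
    case False
    then show ?thesis
      unfolding lca_depth_moments[OF assms(1-3) False] lca_moment_0 m_def r_def
      by (simp add: power2_eq_square algebra_simps)
  qed
  finally show ?thesis .
qed

inductive_cases tree_iso_LeafE: "tree_iso (Leaf i) t"
inductive_cases tree_iso_NodeE: "tree_iso (Node a b) t"

lemma tree_iso_refl: "tree_iso t t"
  by (induct t) (auto intro: tree_iso.intros)

lemma tree_iso_sym: "tree_iso s t \<Longrightarrow> tree_iso t s"
  by (induct rule: tree_iso.induct) (auto intro: tree_iso.intros)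

lemma tree_iso_trans: "tree_iso s t \<Longrightarrow> tree_iso t u \<Longrightarrow> tree_iso s u"
proof (induct arbitrary: u rule: tree_iso.induct)
  case (iso_same a a' b b')
  from iso_same.prems show ?case
    by (rule tree_iso_NodeE) (auto intro: tree_iso.intros iso_same.hyps)
next
  case (iso_swap a b' b a')
  from iso_swap.prems show ?case
    by (rule tree_iso_NodeE) (auto intro: tree_iso.intros iso_swap.hyps)
qed simp

lemma equiv_tree_iso: "equiv UNIV {(s, t). tree_iso s t}"
  by (auto intro!: equivI simp: refl_on_def sym_def trans_def
      intro: tree_iso_refl tree_iso_sym tree_iso_trans)

lemma tree_iso_leaves:
  "tree_iso s t \<Longrightarrow> set (leaves s) = set (leaves t) \<and> length (leaves s) = length (leaves t)"
  by (induct rule: tree_iso.induct) auto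

lemma tree_iso_trees_on: "s \<in> trees_on L \<Longrightarrow> tree_iso s t \<Longrightarrow> t \<in> trees_on L"
  using tree_iso_leaves[of s t] card_distinct[of "leaves t"] distinct_card[of "leaves s"]
  by (simp add: trees_on_def)

lemma lca_depth_tree_iso:
  "tree_iso s t \<Longrightarrow> distinct (leaves s) \<Longrightarrow> lca_depth t i j = lca_depth s i j"
  by (induct rule: tree_iso.induct) (auto dest: tree_iso_leaves)

lemma card_tree_iso_class: "distinct (leaves s) \<Longrightarrow> card {t. tree_iso s t} = 2 ^ size s"
proof (induct s)
  case (Leaf i)
  have "{t. tree_iso (Leaf i) t} = {Leaf i}" by (auto elim: tree_iso_LeafE intro: tree_iso.intros)
  then show ?case by simp
next
  case (Node a b)
  define A where "A = {t. tree_iso a t}"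
  define B where "B = {t. tree_iso b t}"
  have card_AB: "card A = 2 ^ size a" "card B = 2 ^ size b"
    using Node by (auto simp: A_def B_def)
  then have "finite A" "finite B" by (auto intro: card_ge_0_finite)
  have iso_class: "{t. tree_iso (Node a b) t} = case_prod Node ` (A \<times> B) \<union> (\<lambda>(x, y). Node y x) ` (A \<times> B)"
    by (auto simp: A_def B_def intro: tree_iso.intros elim!: tree_iso_NodeE)
  have "A \<inter> B = {}"
    using Node.prems tree_iso_leaves leaves_nonempty unfolding A_def B_def
    by (fastforce simp: disjoint_iff)
  then have "case_prod Node ` (A \<times> B) \<inter> (\<lambda>(x, y). Node y x) ` (A \<times> B) = {}"
    by auto
  moreover have "inj_on (case_prod Node) (A \<times> B)" "inj_on (\<lambda>(x, y). Node y x) (A \<times> B)"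
    by (auto simp: inj_on_def)
  ultimately show ?case
    unfolding iso_class using \<open>finite A\<close> \<open>finite B\<close> card_AB
    by (simp add: card_Un_disjoint card_image card_cartesian_product power_add)
qed

lemma sum_quotient_rep:
  fixes f :: "ptree \<Rightarrow> 'a::comm_semiring_1"
  assumes r: "equiv UNIV r" and "finite A" and closed: "r `` A \<subseteq> A"
    and card_class: "\<And>x. x \<in> A \<Longrightarrow> card (r `` {x}) = k"
    and congr: "\<And>x y. x \<in> A \<Longrightarrow> (x, y) \<in> r \<Longrightarrow> f y = f x"
  shows "of_nat k * (\<Sum>X\<in>A//r. f (rep X)) = (\<Sum>x\<in>A. f x)"
proof -
  have self: "x \<in> r `` {x}" for x using r by (auto simp: equiv_def refl_on_def)
  have sub: "X \<subseteq> A" if "X \<in> A//r" for X using that closed by (auto simp: quotient_def)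
  have "\<Union>(A//r) = A" using sub self by (auto simp: quotient_def)
  moreover have "\<forall>X\<in>A//r. finite X" using sub \<open>finite A\<close> by (auto intro: finite_subset)
  moreover have "\<forall>X\<in>A//r. \<forall>Y\<in>A//r. X \<noteq> Y \<longrightarrow> X \<inter> Y = {}"
    using quotient_disj[OF r] by (auto simp: quotient_def)
  ultimately have "(\<Sum>x\<in>A. f x) = (\<Sum>X\<in>A//r. \<Sum>x\<in>X. f x)"
    using sum.Union_disjoint[of "A//r" f] by simp
  also have "\<dots> = (\<Sum>X\<in>A//r. of_nat k * f (rep X))"
  proof (rule sum.cong[OF refl], erule quotientE)
    fix X x assume X: "X = r `` {x}" "x \<in> A"
    then have "rep X \<in> X" unfolding rep_def using self by (metis someI)
    then have "f (rep X) = f x" using X congr by auto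
    then have "(\<Sum>y\<in>X. f y) = (\<Sum>y\<in>X. f (rep X))" using X congr by (intro sum.cong) auto
    then show "(\<Sum>y\<in>X. f y) = of_nat k * f (rep X)" using X card_class by simp
  qed
  finally show ?thesis by (simp add: sum_distrib_left)
qed

lemma phylo_trees_eq: "phylo_trees n = trees_on {1..n} // {(s, t). tree_iso s t}"
  by (simp add: phylo_trees_def valid_tree_def trees_on_def)

lemma sum_phylo_trees:
  fixes f :: "ptree \<Rightarrow> real"
  assumes "\<And>t u. t \<in> trees_on {1..n} \<Longrightarrow> tree_iso t u \<Longrightarrow> f u = f t"
  shows "2 ^ (n - 1) * (\<Sum>C\<in>phylo_trees n. f (rep C)) = (\<Sum>t\<in>trees_on {1..n}. f t)"
proof -
  have closed: "{(s, t). tree_iso s t} `` trees_on {1..n} \<subseteq> trees_on {1..n}"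
    using tree_iso_trees_on by auto
  have "card ({(s, t). tree_iso s t} `` {t}) = 2 ^ (n - 1)" if "t \<in> trees_on {1..n}" for t
    using that card_tree_iso_class length_leaves[of t] distinct_card[of "leaves t"]
    by (simp add: trees_on_def)
  from sum_quotient_rep[OF equiv_tree_iso finite_trees_on[of "{1..n}"] closed this, of f] assms
  show ?thesis unfolding phylo_trees_eq by simp
qed

lemma coph_dist_sq_tree_iso:
  assumes "t \<in> trees_on {1..n}" "tree_iso t t'"
  shows "coph_dist_sq n t' u = coph_dist_sq n t u" and "coph_dist_sq n u t' = coph_dist_sq n u t"
proof -
  have "cophenetic t' i j = cophenetic t i j" if "i \<in> {1..n}" for i j
    using that assms tree_iso_trees_on[OF assms]
    by (simp add: trees_on_def cophenetic_eq_lca_depth lca_depth_tree_iso)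
  then show "coph_dist_sq n t' u = coph_dist_sq n t u" "coph_dist_sq n u t' = coph_dist_sq n u t"
    by (auto simp: coph_dist_sq_def intro!: sum.cong)
qed

lemma expected_D2_uniform_eq:
  "expected_D2_uniform n = (\<Sum>t\<in>trees_on {1..n}. \<Sum>u\<in>trees_on {1..n}. coph_dist_sq n t u)
     / real (card (trees_on {1..n}))^2"
proof -
  define k :: real where "k = 2 ^ (n - 1)"
  have card: "k * real (card (phylo_trees n)) = real (card (trees_on {1..n}))"
    using sum_phylo_trees[of n "\<lambda>_. 1"] by (simp add: k_def)
  have inner: "k * (\<Sum>D\<in>phylo_trees n. coph_dist_sq n s (rep D))
      = (\<Sum>u\<in>trees_on {1..n}. coph_dist_sq n s u)" for s
    unfolding k_def by (rule sum_phylo_trees) (rule coph_dist_sq_tree_iso(2))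
  have "k * (k * (\<Sum>C\<in>phylo_trees n. \<Sum>D\<in>phylo_trees n. coph_dist_sq n (rep C) (rep D)))
      = k * (\<Sum>C\<in>phylo_trees n. \<Sum>u\<in>trees_on {1..n}. coph_dist_sq n (rep C) u)"
    by (subst sum_distrib_left) (simp only: inner)
  also have "\<dots> = (\<Sum>t\<in>trees_on {1..n}. \<Sum>u\<in>trees_on {1..n}. coph_dist_sq n t u)"
    unfolding k_def by (rule sum_phylo_trees) (simp add: coph_dist_sq_tree_iso(1))
  finally have total: "k * (k * (\<Sum>C\<in>phylo_trees n. \<Sum>D\<in>phylo_trees n. coph_dist_sq n (rep C) (rep D)))
      = (\<Sum>t\<in>trees_on {1..n}. \<Sum>u\<in>trees_on {1..n}. coph_dist_sq n t u)" .
  show ?thesis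
    unfolding expected_D2_uniform_def total[symmetric] card[symmetric] by (simp add: k_def power2_eq_square)
qed

lemma sum_upper_triangle_diag:
  "(\<Sum>i=1..n. \<Sum>j=i..n. if i = j then a else b) = real n * a + real n * (real n - 1) / 2 * (b :: real)"
proof (induct n)
  case (Suc n)
  have "(\<Sum>i=1..Suc n. \<Sum>j=i..Suc n. if i = j then a else b)
      = (\<Sum>i=1..n. (\<Sum>j=i..n. if i = j then a else b) + b) + a"
    by (simp add: sum.cl_ivl_Suc)
  then show ?case using Suc by (simp add: sum.distrib field_simps)
qed simp

lemma sum_swap_nested:
  "(\<Sum>x\<in>A. \<Sum>y\<in>B. \<Sum>i\<in>I. \<Sum>j\<in>J i. f x y i j) = (\<Sum>i\<in>I. \<Sum>j\<in>J i. \<Sum>x\<in>A. \<Sum>y\<in>B. f x y i j)"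
proof -
  have "(\<Sum>x\<in>A. \<Sum>y\<in>B. \<Sum>i\<in>I. \<Sum>j\<in>J i. f x y i j) = (\<Sum>x\<in>A. \<Sum>i\<in>I. \<Sum>y\<in>B. \<Sum>j\<in>J i. f x y i j)"
    by (rule sum.cong[OF refl], rule sum.swap)
  also have "\<dots> = (\<Sum>i\<in>I. \<Sum>x\<in>A. \<Sum>j\<in>J i. \<Sum>y\<in>B. f x y i j)"
    by (subst sum.swap) (rule sum.cong[OF refl], rule sum.cong[OF refl], rule sum.swap)
  also have "\<dots> = (\<Sum>i\<in>I. \<Sum>j\<in>J i. \<Sum>x\<in>A. \<Sum>y\<in>B. f x y i j)"
    by (rule sum.cong[OF refl], rule sum.swap)
  finally show ?thesis .
qed

lemma sum_sum_coph_dist_sq: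
  fixes n :: nat
  defines "N \<equiv> real (card (trees_on {1..n}))" and "r \<equiv> dfact_ratio n"
  shows "(\<Sum>t\<in>trees_on {1..n}. \<Sum>u\<in>trees_on {1..n}. coph_dist_sq n t u)
    = 2 * N^2 * (real n * (4 * real n - 1 - 3 * r - (r - 1)^2)
        + real n * (real n - 1) / 2 * ((4 * real n + 1) / 3 - 3 / 2 * r - (r / 2 - 1)^2))"
proof -
  define A where "A = 4 * real n - 1 - 3 * r - (r - 1)^2"
  define B where "B = (4 * real n + 1) / 3 - 3 / 2 * r - (r / 2 - 1)^2"
  have "(\<Sum>t\<in>trees_on {1..n}. \<Sum>u\<in>trees_on {1..n}. coph_dist_sq n t u) = (\<Sum>i=1..n. \<Sum>j=i..n.
      \<Sum>t\<in>trees_on {1..n}. \<Sum>u\<in>trees_on {1..n}. (real (cophenetic t i j) - real (cophenetic u i j))^2)"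
    unfolding coph_dist_sq_def by (rule sum_swap_nested)
  also have "\<dots> = (\<Sum>i=1..n. \<Sum>j=i..n. 2 * N^2 * (if i = j then A else B))"
    unfolding N_def A_def B_def r_def
    by (intro sum.cong refl) (simp add: sum_sum_diff_square_cophenetic)
  also have "\<dots> = 2 * N^2 * (\<Sum>i=1..n. \<Sum>j=i..n. if i = j then A else B)"
    by (simp only: sum_distrib_left)
  finally show ?thesis
    by (simp only: sum_upper_triangle_diag A_def B_def)
qed

theorem theorem3:
  fixes n :: nat
  assumes "n \<ge> 2"
  shows "expected_D2_uniform n =
           (4 * real n ^ 3 + 18 * real n ^ 2 - 10 * real n) / 3
         - real n * (real n + 3) / 2 * (real (dfact (2*n - 2)) / real (dfact (2*n - 3)))
         - real n * (real n + 7) / 4 * (real (dfact (2*n - 2)) / real (dfact (2*n - 3)))^2"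
proof -
  have "real (card (trees_on {1..n})) \<noteq> 0"
    using finite_trees_on[of "{1..n}"] trees_on_nonempty[of "{1..n}"] assms by simp
  moreover have "real (dfact (2*n - 2)) / real (dfact (2*n - 3)) = dfact_ratio n"
    by (simp add: dfact_ratio_def)
  ultimately show ?thesis
    unfolding expected_D2_uniform_eq sum_sum_coph_dist_sq
    by (simp add: field_simps power2_eq_square power3_eq_cube)
qed

end
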